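(* Let $\{(\mathcal{X}_l,\mathring{\mathcal{X}}_l,p_l)\}_{l\in\mathcal{I}}$ be $B$-$B$-bimodules with specified projections with reduced free product $(\mathcal{X},\mathring{\mathcal{X}},p)$. For $1\le i\le m$ let $A_i\in\mathcal{A}_{k(i)}$ be a Boolean product of elements from $\mathcal{A}_{k(i),\mathcal{F}}\cup\mathcal{A}_{k(i),\mathcal{B}}$, where $k(1)\ne k(2)\ne\cdots\ne k(m)$ (consecutive indices distinct). Then $\mathbb{E}_{\mathcal{L}(\mathcal{X})}(A_1\cdots A_m)=\mathbb{E}_{\mathcal{L}(\mathcal{X})}(A_1)\cdots\mathbb{E}_{\mathcal{L}(\mathcal{X})}(A_m)$.
   Context: $B$ is a unital complex algebra. A $B$-$B$-bimodule with specified projection is a triple $(\mathcal{X},\mathring{\mathcal{X}},p)$ with $\mathcal{X}=B\oplus\mathring{\mathcal{X}}$ a direct sum of $B$-$B$-bimodules and $p(b\oplus\eta)=b$; $\mathcal{L}(\mathcal{X})$ is the algebra of linear operators on $\mathcal{X}$ respecting the bimodule structure and $\mathbb{E}_{\mathcal{L}(\mathcal{X})}(T)=p(T(1_B\oplus0))$. The reduced free product is $\mathcal{X}=B\oplus\mathring{\mathcal{X}}$ with $\mathring{\mathcal{X}}=\bigoplus_{n\ge1}\bigoplus_{i_1\ne\cdots\ne i_n}\mathring{\mathcal{X}}_{i_1}\otimes_B\cdots\otimes_B\mathring{\mathcal{X}}_{i_n}$ (consecutive indices distinct), $p$ the projection onto $B$. For $l\in\mathcal{I}$, $\mathcal{X}(l)=B\oplus\bigoplus_{n\ge1}\bigoplus_{i_1\ne\cdots\ne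 i_n,\ i_1\ne l}\mathring{\mathcal{X}}_{i_1}\otimes_B\cdots\otimes_B\mathring{\mathcal{X}}_{i_n}$, $V_l:\mathcal{X}\to\mathcal{X}_l\otimes_B\mathcal{X}(l)$ the natural isomorphism, $\lambda_l(a)=V_l^{-1}(a\otimes I)V_l$, $P_l$ the projection onto the summand $B\oplus\mathring{\mathcal{X}}_l$, $\mathcal{A}_{l,\mathcal{F}}=\lambda_l(\mathcal{L}(\mathcal{X}_l))$, $\mathcal{A}_{l,\mathcal{B}}=P_l\lambda_l(\mathcal{L}(\mathcal{X}_l))P_l$, $\mathcal{A}_l$ the algebra generated by both. A product $a_1\cdots a_r$ with all $a_t\in\mathcal{A}_{l,\mathcal{F}}\cup\mathcal{A}_{l,\mathcal{B}}$ is a Boolean product if some factor $a_t$ lies in $\mathcal{A}_{l,\mathcal{B}}$. *)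

theory Defs
  imports Complex_Main "HOL-Library.Poly_Mapping" "HOL-Library.Product_Plus"
begin

definition complex_algebra :: "(complex \<Rightarrow> 'b::ring_1) \<Rightarrow> bool" where
  "complex_algebra \<iota> \<longleftrightarrow>
     \<iota> 1 = 1 \<and> (\<forall>c d. \<iota> (c + d) = \<iota> c + \<iota> d) \<and> (\<forall>c d. \<iota> (c * d) = \<iota> c * \<iota> d)
     \<and> (\<forall>c b. \<iota> c * b = b * \<iota> c)"

record ('b, 'v) bimod =
  bm_carrier :: "'v set"
  bm_zero :: 'v
  bm_add :: "'v \<Rightarrow> 'v \<Rightarrow> 'v"
  bm_lmul :: "'b \<Rightarrow> 'v \<Rightarrow> 'v"
  bm_rmul :: "'v \<Rightarrow> 'b \<Rightarrow> 'v"

text \<open>A B-B-bimodule (over the complex algebra B; complex scalars act through \<iota>,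
  and the left and right complex actions agree).\<close>

definition bimodule :: "(complex \<Rightarrow> 'b::ring_1) \<Rightarrow> ('b, 'v, 'z) bimod_scheme \<Rightarrow> bool" where
  "bimodule \<iota> M \<longleftrightarrow>
    (let C = bm_carrier M; z = bm_zero M; ad = bm_add M; lm = bm_lmul M; rm = bm_rmul M in
     z \<in> C \<and> (\<forall>x\<in>C. \<forall>y\<in>C. ad x y \<in> C)
     \<and> (\<forall>x\<in>C. \<forall>y\<in>C. \<forall>w\<in>C. ad (ad x y) w = ad x (ad y w))
     \<and> (\<forall>x\<in>C. \<forall>y\<in>C. ad x y = ad y x)
     \<and> (\<forall>x\<in>C. ad z x = x)
     \<and> (\<forall>x\<in>C. \<exists>y\<in>C. ad x y = z)
     \<and> (\<forall>b. \<forall>x\<in>C. lm b x \<in> C \<and> rm x b \<in> C)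
     \<and> (\<forall>x\<in>C. lm 1 x = x \<and> rm x 1 = x)
     \<and> (\<forall>b b'. \<forall>x\<in>C. lm (b * b') x = lm b (lm b' x))
     \<and> (\<forall>b b'. \<forall>x\<in>C. rm x (b * b') = rm (rm x b) b')
     \<and> (\<forall>b b'. \<forall>x\<in>C. lm b (rm x b') = rm (lm b x) b')
     \<and> (\<forall>b. \<forall>x\<in>C. \<forall>y\<in>C. lm b (ad x y) = ad (lm b x) (lm b y))
     \<and> (\<forall>b. \<forall>x\<in>C. \<forall>y\<in>C. rm (ad x y) b = ad (rm x b) (rm y b))
     \<and> (\<forall>b b'. \<forall>x\<in>C. lm (b + b') x = ad (lm b x) (lm b' x))
     \<and> (\<forall>b b'. \<forall>x\<in>C. rm x (b + b') = ad (rm x b) (rm x b'))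
     \<and> (\<forall>c. \<forall>x\<in>C. lm (\<iota> c) x = rm x (\<iota> c)))"

text \<open>Linear operators respecting the bimodule structure (complex linearity follows
  from additivity and B-linearity, since complex scalars act through B).\<close>

definition bimod_map :: "('b::ring_1, 'v, 'z) bimod_scheme \<Rightarrow> ('b, 'w, 'y) bimod_scheme \<Rightarrow> ('v \<Rightarrow> 'w) \<Rightarrow> bool" where
  "bimod_map M N T \<longleftrightarrow>
     (\<forall>x\<in>bm_carrier M. T x \<in> bm_carrier N)
     \<and> (\<forall>x\<in>bm_carrier M. \<forall>y\<in>bm_carrier M. T (bm_add M x y) = bm_add N (T x) (T y))
     \<and> (\<forall>b. \<forall>x\<in>bm_carrier M. T (bm_lmul M b x) = bm_lmul N b (T x))
     \<and> (\<forall>b. \<forall>x\<in>bm_carrier M. T (bm_rmul M x b) = bm_rmul N (T x) b)"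

text \<open>The bimodule with specified projection X = B \<oplus> Xo, elements being pairs (b, \<eta>).\<close>

definition plusB :: "('b::ring_1, 'v, 'z) bimod_scheme \<Rightarrow> ('b, 'b \<times> 'v) bimod" where
  "plusB M = \<lparr> bm_carrier = UNIV \<times> bm_carrier M,
               bm_zero = (0, bm_zero M),
               bm_add = (\<lambda>(b, x) (b', x'). (b + b', bm_add M x x')),
               bm_lmul = (\<lambda>c (b, x). (c * b, bm_lmul M c x)),
               bm_rmul = (\<lambda>(b, x) c. (b * c, bm_rmul M x c)) \<rparr>"

definition Lops :: "('b::ring_1, 'v, 'z) bimod_scheme \<Rightarrow> ('b \<times> 'v \<Rightarrow> 'b \<times> 'v) set" where
  "Lops M = {a. bimod_map (plusB M) (plusB M) a}"

text \<open>Words (i_1,\<xi>_1)\<dots>(i_n,\<xi>_n), n \<ge> 1, consecutive indices distinct, \<xi>_j \<in> Xo_{i_j};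
  the word stands for the elementary tensor \<xi>_1 \<otimes>_B \<dots> \<otimes>_B \<xi>_n.\<close>

definition fp_words :: "('i \<Rightarrow> ('b, 'v, 'z) bimod_scheme) \<Rightarrow> 'i set \<Rightarrow> ('i \<times> 'v) list set" where
  "fp_words Xo I = {w. w \<noteq> [] \<and> (\<forall>(i, x)\<in>set w. i \<in> I \<and> x \<in> bm_carrier (Xo i))
                       \<and> (\<forall>j. Suc j < length w \<longrightarrow> fst (w ! j) \<noteq> fst (w ! Suc j))}"

text \<open>Generators of the relations defining the algebraic tensor products over B
  (additivity in each slot and B-balancedness between adjacent slots).\<close>

definition fp_gens :: "('i \<Rightarrow> ('b::ring_1, 'v, 'z) bimod_scheme) \<Rightarrow> 'i set \<Rightarrow> (('i \<times> 'v) list \<Rightarrow>\<^sub>0 int) set" where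
  "fp_gens Xo I =
     {frag_of (u @ [(i, bm_add (Xo i) x y)] @ v) - frag_of (u @ [(i, x)] @ v) - frag_of (u @ [(i, y)] @ v)
        | u v i x y. u @ [(i, x)] @ v \<in> fp_words Xo I \<and> y \<in> bm_carrier (Xo i)}
   \<union> {frag_of (u @ [(i, bm_rmul (Xo i) x b), (j, y)] @ v) - frag_of (u @ [(i, x), (j, bm_lmul (Xo j) b y)] @ v)
        | u v i x j y b. u @ [(i, x), (j, y)] @ v \<in> fp_words Xo I}"

inductive_set fp_rel :: "('i \<Rightarrow> ('b::ring_1, 'v, 'z) bimod_scheme) \<Rightarrow> 'i set \<Rightarrow> (('i \<times> 'v) list \<Rightarrow>\<^sub>0 int) set"
  for Xo I where
  zero: "0 \<in> fp_rel Xo I"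
| gen: "g \<in> fp_gens Xo I \<Longrightarrow> g \<in> fp_rel Xo I"
| add: "g \<in> fp_rel Xo I \<Longrightarrow> h \<in> fp_rel Xo I \<Longrightarrow> g + h \<in> fp_rel Xo I"
| neg: "g \<in> fp_rel Xo I \<Longrightarrow> - g \<in> fp_rel Xo I"

text \<open>Representatives of elements of X = B \<oplus> Xo: a B-component and an integer
  combination of words; an element of X is the class of a representative modulo
  {0} \<times> fp_rel.\<close>

type_synonym ('b, 'i, 'v) fp_rep = "'b \<times> (('i \<times> 'v) list \<Rightarrow>\<^sub>0 int)"
type_synonym ('b, 'i, 'v) fp_elem = "('b, 'i, 'v) fp_rep set"

definition fp_cls :: "('i \<Rightarrow> ('b::ring_1, 'v, 'z) bimod_scheme) \<Rightarrow> 'i set \<Rightarrow> ('b, 'i, 'v) fp_rep \<Rightarrow> ('b, 'i, 'v) fp_elem" where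
  "fp_cls Xo I r = {r + (0, n) | n. n \<in> fp_rel Xo I}"

definition fp_lift :: "('i \<Rightarrow> ('b::ring_1, 'v, 'z) bimod_scheme) \<Rightarrow> 'i set \<Rightarrow> (('b, 'i, 'v) fp_rep \<Rightarrow> ('b, 'i, 'v) fp_rep) \<Rightarrow> ('b, 'i, 'v) fp_elem \<Rightarrow> ('b, 'i, 'v) fp_elem" where
  "fp_lift Xo I F x = {F r + (0, n) | r n. r \<in> x \<and> n \<in> fp_rel Xo I}"

definition rep_extend :: "('b::ring_1 \<Rightarrow> ('b, 'i, 'v) fp_rep) \<Rightarrow> (('i \<times> 'v) list \<Rightarrow> ('b, 'i, 'v) fp_rep) \<Rightarrow> ('b, 'i, 'v) fp_rep \<Rightarrow> ('b, 'i, 'v) fp_rep" where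
  "rep_extend fB fW r =
     fB (fst r) + ((\<Sum>w\<in>Poly_Mapping.keys (snd r). of_int (Poly_Mapping.lookup (snd r) w) * fst (fW w)),
                   frag_extend (\<lambda>w. snd (fW w)) (snd r))"

definition word_lmul :: "('i \<Rightarrow> ('b::ring_1, 'v, 'z) bimod_scheme) \<Rightarrow> 'b \<Rightarrow> ('i \<times> 'v) list \<Rightarrow> ('i \<times> 'v) list" where
  "word_lmul Xo b w = (case w of [] \<Rightarrow> [] | (i, x) # u \<Rightarrow> (i, bm_lmul (Xo i) b x) # u)"

definition word_rmul :: "('i \<Rightarrow> ('b::ring_1, 'v, 'z) bimod_scheme) \<Rightarrow> ('i \<times> 'v) list \<Rightarrow> 'b \<Rightarrow> ('i \<times> 'v) list" where
  "word_rmul Xo w b = (if w = [] then [] else butlast w @ [(fst (last w), bm_rmul (Xo (fst (last w))) (snd (last w)) b)])"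

definition free_product :: "('i \<Rightarrow> ('b::ring_1, 'v, 'z) bimod_scheme) \<Rightarrow> 'i set \<Rightarrow> ('b, ('b, 'i, 'v) fp_elem) bimod" where
  "free_product Xo I =
     \<lparr> bm_carrier = {fp_cls Xo I (b, g) | b g. Poly_Mapping.keys g \<subseteq> fp_words Xo I},
       bm_zero = fp_cls Xo I 0,
       bm_add = (\<lambda>x y. {r + s | r s. r \<in> x \<and> s \<in> y}),
       bm_lmul = (\<lambda>c. fp_lift Xo I (rep_extend (\<lambda>b. (c * b, 0)) (\<lambda>w. (0, frag_of (word_lmul Xo c w))))),
       bm_rmul = (\<lambda>x c. fp_lift Xo I (rep_extend (\<lambda>b. (b * c, 0)) (\<lambda>w. (0, frag_of (word_rmul Xo w c)))) x) \<rparr>"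

definition fp_p :: "('b, 'i, 'v) fp_elem \<Rightarrow> 'b" where
  "fp_p x = fst (SOME r. r \<in> x)"

definition fp_E :: "('i \<Rightarrow> ('b::ring_1, 'v, 'z) bimod_scheme) \<Rightarrow> 'i set \<Rightarrow> (('b, 'i, 'v) fp_elem \<Rightarrow> ('b, 'i, 'v) fp_elem) \<Rightarrow> 'b" where
  "fp_E Xo I T = fp_p (T (fp_cls Xo I (1, 0)))"

text \<open>\<lambda>_l(a) = V_l^(-1) (a \<otimes> I) V_l, computed on representatives:
  a word (l,\<xi>)w' (w' \<in> X(l)) corresponds to \<xi> \<otimes> w', and a word w (or b \<in> B) in X(l)
  corresponds to (1_B \<oplus> 0) \<otimes> w. Writing a(\<zeta>) = b' \<oplus> \<eta>, the image of \<zeta> \<otimes> w' is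
  b'w' + (l,\<eta>)w'.\<close>

definition lam_word :: "('i \<Rightarrow> ('b::ring_1, 'v, 'z) bimod_scheme) \<Rightarrow> 'i \<Rightarrow> ('b \<times> 'v \<Rightarrow> 'b \<times> 'v)
     \<Rightarrow> ('i \<times> 'v) list \<Rightarrow> ('b, 'i, 'v) fp_rep" where
  "lam_word Xo l a w =
     (case w of
        [] \<Rightarrow> 0
      | (i, x) # u \<Rightarrow>
          (if i = l then
             (let (b', \<eta>) = a (0, x) in
                if u = [] then (b', frag_of [(l, \<eta>)])
                else (0, frag_of (word_lmul Xo b' u) + frag_of ((l, \<eta>) # u)))
           else
             (let (b', \<eta>) = a (1, bm_zero (Xo l)) in
                (0, frag_of (word_lmul Xo b' w) + frag_of ((l, \<eta>) # w)))))"

definition lam_B :: "'i \<Rightarrow> ('b::ring_1 \<times> 'v \<Rightarrow> 'b \<times> 'v) \<Rightarrow> ('i \<Rightarrow> ('b, 'v, 'z) bimod_scheme) \<Rightarrow> 'b \<Rightarrow> ('b, 'i, 'v) fp_rep" where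
  "lam_B l a Xo b = (let (b', \<eta>) = a (b, bm_zero (Xo l)) in (b', frag_of [(l, \<eta>)]))"

definition fp_lambda :: "('i \<Rightarrow> ('b::ring_1, 'v, 'z) bimod_scheme) \<Rightarrow> 'i set \<Rightarrow> 'i \<Rightarrow> ('b \<times> 'v \<Rightarrow> 'b \<times> 'v)
     \<Rightarrow> ('b, 'i, 'v) fp_elem \<Rightarrow> ('b, 'i, 'v) fp_elem" where
  "fp_lambda Xo I l a = fp_lift Xo I (rep_extend (lam_B l a Xo) (lam_word Xo l a))"

definition fp_P :: "('i \<Rightarrow> ('b::ring_1, 'v, 'z) bimod_scheme) \<Rightarrow> 'i set \<Rightarrow> 'i
     \<Rightarrow> ('b, 'i, 'v) fp_elem \<Rightarrow> ('b, 'i, 'v) fp_elem" where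
  "fp_P Xo I l = fp_lift Xo I (rep_extend (\<lambda>b. (b, 0))
      (\<lambda>w. if length w = 1 \<and> fst (hd w) = l then (0, frag_of w) else 0))"

definition A_free :: "('i \<Rightarrow> ('b::ring_1, 'v, 'z) bimod_scheme) \<Rightarrow> 'i set \<Rightarrow> 'i
     \<Rightarrow> (('b, 'i, 'v) fp_elem \<Rightarrow> ('b, 'i, 'v) fp_elem) set" where
  "A_free Xo I l = fp_lambda Xo I l ` Lops (Xo l)"

definition A_bool :: "('i \<Rightarrow> ('b::ring_1, 'v, 'z) bimod_scheme) \<Rightarrow> 'i set \<Rightarrow> 'i
     \<Rightarrow> (('b, 'i, 'v) fp_elem \<Rightarrow> ('b, 'i, 'v) fp_elem) set" where
  "A_bool Xo I l = (\<lambda>a. fp_P Xo I l \<circ> fp_lambda Xo I l a \<circ> fp_P Xo I l) ` Lops (Xo l)"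

definition boolean_product :: "('i \<Rightarrow> ('b::ring_1, 'v, 'z) bimod_scheme) \<Rightarrow> 'i set \<Rightarrow> 'i
     \<Rightarrow> (('b, 'i, 'v) fp_elem \<Rightarrow> ('b, 'i, 'v) fp_elem) \<Rightarrow> bool" where
  "boolean_product Xo I l A \<longleftrightarrow>
     (\<exists>as. as \<noteq> [] \<and> set as \<subseteq> A_free Xo I l \<union> A_bool Xo I l
           \<and> (\<exists>a\<in>set as. a \<in> A_bool Xo I l) \<and> A = foldr (\<circ>) as id)"

end

theory Submission
  imports Defs
begin

text \<open>Write \<open>B \<oplus> Xo\<^sub>l\<close> for the summand of the free product spanned by \<open>B\<close> and the
  one-letter words of colour \<open>l\<close>. The operators \<open>\<lambda>\<^sub>l(a)\<close> and \<open>P\<^sub>l\<close> map this summand to itself,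
  acting there as \<open>a\<close> and as the identity; so every product \<open>A\<close> of them acts on it as a right
  \<open>B\<close>-linear operator, and sends \<open>1\<close> to \<open>E(A) \<oplus> \<xi>\<close>. For \<open>j \<noteq> l\<close>, \<open>\<lambda>\<^sub>l(a)\<close> also maps the span
  of the words \<open>(j,x)\<close> and \<open>(l,y)(j,x)\<close> to itself, while \<open>P\<^sub>l\<close> annihilates it; hence a Boolean
  product \<open>A\<close> satisfies \<open>A(c \<oplus> \<xi>) = A(c \<oplus> 0) = E(A)c \<oplus> \<xi>'\<close> for \<open>\<xi> \<in> Xo\<^sub>j\<close>. Applying
  \<open>A\<^sub>m, \<dots>, A\<^sub>1\<close> to \<open>1\<close> in turn, the \<open>B\<close>-component therefore accumulates
  \<open>E(A\<^sub>1) \<cdots> E(A\<^sub>m)\<close>.\<close>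

definition word_extend ::
    "(('i \<times> 'v) list \<Rightarrow> ('b::ring_1, 'i, 'v) fp_rep) \<Rightarrow> (('i \<times> 'v) list \<Rightarrow>\<^sub>0 int) \<Rightarrow> ('b, 'i, 'v) fp_rep" where
  "word_extend fW g = ((\<Sum>w\<in>Poly_Mapping.keys g. of_int (Poly_Mapping.lookup g w) * fst (fW w)),
                       frag_extend (\<lambda>w. snd (fW w)) g)"

lemma rep_extend_eq: "rep_extend fB fW r = fB (fst r) + word_extend fW (snd r)"
  by (simp add: rep_extend_def word_extend_def)

lemma sum_keys_superset:
  fixes f :: "'a \<Rightarrow> 'b::ring_1"
  assumes "finite T" "Poly_Mapping.keys g \<subseteq> T"
  shows "(\<Sum>w\<in>Poly_Mapping.keys g. of_int (Poly_Mapping.lookup g w) * f w)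
       = (\<Sum>w\<in>T. of_int (Poly_Mapping.lookup g w) * f w)"
  by (rule sum.mono_neutral_left) (use assms in \<open>auto simp: in_keys_iff\<close>)

lemma sum_keys_add:
  fixes f :: "'a \<Rightarrow> 'b::ring_1"
  shows "(\<Sum>w\<in>Poly_Mapping.keys (g + h). of_int (Poly_Mapping.lookup (g + h) w) * f w)
       = (\<Sum>w\<in>Poly_Mapping.keys g. of_int (Poly_Mapping.lookup g w) * f w)
       + (\<Sum>w\<in>Poly_Mapping.keys h. of_int (Poly_Mapping.lookup h w) * f w)"
proof -
  let ?T = "Poly_Mapping.keys g \<union> Poly_Mapping.keys h"
  have fin: "finite ?T" by simp
  have keys: "Poly_Mapping.keys (g + h) \<subseteq> ?T" "Poly_Mapping.keys g \<subseteq> ?T" "Poly_Mapping.keys h \<subseteq> ?T"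
    using keys_add[of g h] by auto
  have "(\<Sum>w\<in>Poly_Mapping.keys (g + h). of_int (Poly_Mapping.lookup (g + h) w) * f w)
      = (\<Sum>w\<in>?T. of_int (Poly_Mapping.lookup (g + h) w) * f w)"
    by (rule sum_keys_superset[OF fin keys(1)])
  also have "\<dots> = (\<Sum>w\<in>?T. of_int (Poly_Mapping.lookup g w) * f w) + (\<Sum>w\<in>?T. of_int (Poly_Mapping.lookup h w) * f w)"
    by (simp add: lookup_add distrib_right sum.distrib)
  finally show ?thesis
    by (simp only: sum_keys_superset[OF fin keys(2)] sum_keys_superset[OF fin keys(3)])
qed

lemma word_extend_add: "word_extend fW (g + h) = word_extend fW g + word_extend fW h"
  by (simp add: word_extend_def sum_keys_add frag_extend_add)

lemma word_extend_0: "word_extend fW 0 = 0"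
  by (simp add: word_extend_def zero_prod_def)

lemma word_extend_uminus: "word_extend fW (- g) = - word_extend fW g"
  by (metis add.inverse_unique add.right_inverse word_extend_0 word_extend_add)

lemma word_extend_diff: "word_extend fW (g - h) = word_extend fW g - word_extend fW h"
  by (metis diff_conv_add_uminus word_extend_add word_extend_uminus)

lemma word_extend_frag_of: "word_extend fW (frag_of w) = fW w"
  by (simp add: word_extend_def)

lemma fp_rel_diff: "g \<in> fp_rel Xo I \<Longrightarrow> h \<in> fp_rel Xo I \<Longrightarrow> g - h \<in> fp_rel Xo I"
  by (metis diff_conv_add_uminus fp_rel.add fp_rel.neg)

lemma fp_cls_eqI:
  assumes "fst r = fst s" "snd r - snd s \<in> fp_rel Xo I"
  shows "fp_cls Xo I r = fp_cls Xo I s"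
proof -
  have "\<And>n. n \<in> fp_rel Xo I \<Longrightarrow> r + (0, n) = s + (0, n + (snd r - snd s))"
    and "\<And>n. n \<in> fp_rel Xo I \<Longrightarrow> s + (0, n) = r + (0, n - (snd r - snd s))"
    using assms by (cases r, cases s, auto)+
  then show ?thesis unfolding fp_cls_def
    using assms(2) by (auto intro!: fp_rel.add fp_rel_diff)
qed

lemma in_fp_cls: "r \<in> fp_cls Xo I r"
  unfolding fp_cls_def using fp_rel.zero
  by (metis (mono_tags, lifting) add.right_neutral mem_Collect_eq zero_prod_def)

lemma fp_p_fp_cls: "fp_p (fp_cls Xo I r) = fst r"
proof -
  have "(SOME s. s \<in> fp_cls Xo I r) \<in> fp_cls Xo I r" by (rule someI, rule in_fp_cls)
  then show ?thesis unfolding fp_p_def fp_cls_def by auto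
qed

text \<open>A map on words induces a well-defined map on the free product when it sends the
  defining relations to relations without \<open>B\<close>-component.\<close>

definition respects_fp_rel ::
    "('i \<Rightarrow> ('b::ring_1, 'v, 'z) bimod_scheme) \<Rightarrow> 'i set \<Rightarrow> (('i \<times> 'v) list \<Rightarrow> ('b, 'i, 'v) fp_rep) \<Rightarrow> bool" where
  "respects_fp_rel Xo I fW \<longleftrightarrow> (\<forall>g\<in>fp_gens Xo I. word_extend fW g \<in> {0} \<times> fp_rel Xo I)"

lemma respects_fp_relD:
  assumes "respects_fp_rel Xo I fW" "n \<in> fp_rel Xo I"
  shows "word_extend fW n \<in> {0} \<times> fp_rel Xo I"
  using assms(2)
proof induction
  case zero then show ?case by (simp add: word_extend_0 zero_prod_def fp_rel.zero)
next
  case (gen g) then show ?case using assms(1) respects_fp_rel_def by blast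
next
  case (add g h) then show ?case by (auto simp: word_extend_add fp_rel.add)
next
  case (neg g) then show ?case by (auto simp: word_extend_uminus fp_rel.neg)
qed

lemma fp_lift_fp_cls:
  assumes "respects_fp_rel Xo I fW"
  shows "fp_lift Xo I (rep_extend fB fW) (fp_cls Xo I r) = fp_cls Xo I (rep_extend fB fW r)"
proof (rule set_eqI, rule iffI)
  fix z assume "z \<in> fp_lift Xo I (rep_extend fB fW) (fp_cls Xo I r)"
  then obtain n1 n where n1: "n1 \<in> fp_rel Xo I" and n: "n \<in> fp_rel Xo I"
    and z: "z = rep_extend fB fW (r + (0, n1)) + (0, n)"
    unfolding fp_lift_def fp_cls_def by blast
  obtain n1' where n1': "word_extend fW n1 = (0, n1')" "n1' \<in> fp_rel Xo I"
    using respects_fp_relD[OF assms n1] by auto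
  have "z = rep_extend fB fW r + (0, n1' + n)"
    using z n1' by (simp add: rep_extend_eq word_extend_add)
  then show "z \<in> fp_cls Xo I (rep_extend fB fW r)"
    unfolding fp_cls_def using n1' n fp_rel.add by blast
next
  fix z assume "z \<in> fp_cls Xo I (rep_extend fB fW r)"
  then obtain n where n: "n \<in> fp_rel Xo I" and z: "z = rep_extend fB fW r + (0, n)"
    unfolding fp_cls_def by blast
  then show "z \<in> fp_lift Xo I (rep_extend fB fW) (fp_cls Xo I r)"
    unfolding fp_lift_def using in_fp_cls[of r Xo I] by blast
qed

lemma bimoduleD:
  assumes "bimodule \<iota> M"
  shows bm_zero_closed: "bm_zero M \<in> bm_carrier M"
    and bm_lmul_closed: "\<And>b x. x \<in> bm_carrier M \<Longrightarrow> bm_lmul M b x \<in> bm_carrier M"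
    and bm_rmul_closed: "\<And>b x. x \<in> bm_carrier M \<Longrightarrow> bm_rmul M x b \<in> bm_carrier M"
    and bm_add_zero_left: "\<And>x. x \<in> bm_carrier M \<Longrightarrow> bm_add M (bm_zero M) x = x"
    and bm_lmul_add: "\<And>b x y. x \<in> bm_carrier M \<Longrightarrow> y \<in> bm_carrier M \<Longrightarrow>
          bm_lmul M b (bm_add M x y) = bm_add M (bm_lmul M b x) (bm_lmul M b y)"
    and bm_lmul_add_scalar: "\<And>b b' x. x \<in> bm_carrier M \<Longrightarrow>
          bm_lmul M (b + b') x = bm_add M (bm_lmul M b x) (bm_lmul M b' x)"
    and bm_lmul_mult: "\<And>b b' x. x \<in> bm_carrier M \<Longrightarrow> bm_lmul M (b * b') x = bm_lmul M b (bm_lmul M b' x)"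
    and bm_lmul_rmul: "\<And>b b' x. x \<in> bm_carrier M \<Longrightarrow>
          bm_lmul M b (bm_rmul M x b') = bm_rmul M (bm_lmul M b x) b'"
    and bm_add_assoc: "\<And>x y w. x \<in> bm_carrier M \<Longrightarrow> y \<in> bm_carrier M \<Longrightarrow> w \<in> bm_carrier M \<Longrightarrow>
          bm_add M (bm_add M x y) w = bm_add M x (bm_add M y w)"
    and bm_add_commute: "\<And>x y. x \<in> bm_carrier M \<Longrightarrow> y \<in> bm_carrier M \<Longrightarrow> bm_add M x y = bm_add M y x"
    and bm_add_inverse: "\<And>x. x \<in> bm_carrier M \<Longrightarrow> \<exists>y\<in>bm_carrier M. bm_add M x y = bm_zero M"
    and bm_rmul_add: "\<And>b x y. x \<in> bm_carrier M \<Longrightarrow> y \<in> bm_carrier M \<Longrightarrow>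
          bm_rmul M (bm_add M x y) b = bm_add M (bm_rmul M x b) (bm_rmul M y b)"
  using assms unfolding bimodule_def Let_def by auto

lemma bm_rmul_zero:
  assumes M: "bimodule \<iota> M"
  shows "bm_rmul M (bm_zero M) c = bm_zero M"
proof -
  let ?z = "bm_zero M" and ?y = "bm_rmul M (bm_zero M) c"
  note z = bm_zero_closed[OF M]
  have y: "?y \<in> bm_carrier M" using bm_rmul_closed[OF M z] .
  have "?y = bm_rmul M (bm_add M ?z ?z) c" using bm_add_zero_left[OF M z] by simp
  then have yy: "bm_add M ?y ?y = ?y" using bm_rmul_add[OF M z z] by simp
  obtain y' where y': "y' \<in> bm_carrier M" "bm_add M ?y y' = ?z" using bm_add_inverse[OF M y] by blast
  have "?z = bm_add M (bm_add M ?y ?y) y'" using yy y' by simp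
  also have "\<dots> = bm_add M ?y ?z" using bm_add_assoc[OF M y y y'(1)] y' by simp
  also have "\<dots> = ?y" using bm_add_commute[OF M y z] bm_add_zero_left[OF M y] by simp
  finally show ?thesis by simp
qed

lemma Lops_carrier: "a \<in> Lops M \<Longrightarrow> x \<in> bm_carrier M \<Longrightarrow> snd (a (b, x)) \<in> bm_carrier M"
  unfolding Lops_def bimod_map_def plusB_def by (auto simp: mem_Times_iff)

lemma Lops_add:
  assumes "a \<in> Lops M" "x \<in> bm_carrier M" "x' \<in> bm_carrier M"
  shows "a (b + b', bm_add M x x') =
           (fst (a (b, x)) + fst (a (b', x')), bm_add M (snd (a (b, x))) (snd (a (b', x'))))"
proof -
  have "a (bm_add (plusB M) (b, x) (b', x')) = bm_add (plusB M) (a (b, x)) (a (b', x'))"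
    using assms unfolding Lops_def bimod_map_def by (auto simp: plusB_def)
  then show ?thesis by (simp add: plusB_def case_prod_beta)
qed

lemma Lops_rmul:
  assumes "a \<in> Lops M" "x \<in> bm_carrier M"
  shows "a (b * c, bm_rmul M x c) = (fst (a (b, x)) * c, bm_rmul M (snd (a (b, x))) c)"
proof -
  have "a (bm_rmul (plusB M) (b, x) c) = bm_rmul (plusB M) (a (b, x)) c"
    using assms unfolding Lops_def bimod_map_def by (auto simp: plusB_def)
  then show ?thesis by (simp add: plusB_def case_prod_beta)
qed

lemma successively_upt_0_iff:
  "successively P [0..<m] \<longleftrightarrow> (\<forall>n. Suc n < m \<longrightarrow> P n (Suc n))"
proof (induction m)
  case (Suc m)
  then show ?case by (cases m) (auto simp: successively_append_iff less_Suc_eq)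
qed simp

lemma alternating_iff_successively:
  "(\<forall>j. Suc j < length w \<longrightarrow> fst (w ! j) \<noteq> fst (w ! Suc j)) \<longleftrightarrow> successively (\<noteq>) (map fst w)"
proof (induction w rule: induct_list012)
  case (3 x y zs)
  have "(\<forall>j. Suc j < length (x # y # zs) \<longrightarrow> fst ((x # y # zs) ! j) \<noteq> fst ((x # y # zs) ! Suc j))
      \<longleftrightarrow> fst x \<noteq> fst y \<and> (\<forall>j. Suc j < length (y # zs) \<longrightarrow> fst ((y # zs) ! j) \<noteq> fst ((y # zs) ! Suc j))"
    by (auto simp: less_Suc_eq_0_disj All_less_Suc2 nth_Cons split: nat.splits)
  then show ?case using 3 by simp
qed auto

lemma fp_words_iff:
  "w \<in> fp_words Xo I \<longleftrightarrow> w \<noteq> [] \<and> (\<forall>p\<in>set w. fst p \<in> I \<and> snd p \<in> bm_carrier (Xo (fst p)))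
     \<and> successively (\<noteq>) (map fst w)"
  unfolding fp_words_def alternating_iff_successively[symmetric] by auto

lemma fp_words_replace:
  assumes "u @ [(i, x)] @ v \<in> fp_words Xo I" "x' \<in> bm_carrier (Xo i)"
  shows "u @ [(i, x')] @ v \<in> fp_words Xo I"
  using assms unfolding fp_words_iff by (auto simp: successively_append_iff)

lemma fp_words_letterD:
  "u @ (i, x) # v \<in> fp_words Xo I \<Longrightarrow> i \<in> I \<and> x \<in> bm_carrier (Xo i)"
  unfolding fp_words_iff by auto

lemma fp_words_Cons:
  assumes "w \<in> fp_words Xo I" "l \<in> I" "\<eta> \<in> bm_carrier (Xo l)" "l \<noteq> fst (hd w)"
  shows "(l, \<eta>) # w \<in> fp_words Xo I"
  using assms unfolding fp_words_iff by (cases w) auto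

lemma fp_words_ConsD:
  assumes "p # w \<in> fp_words Xo I" "w \<noteq> []"
  shows "w \<in> fp_words Xo I" "fst p \<noteq> fst (hd w)"
  using assms unfolding fp_words_iff by (cases w; auto)+

lemma fp_rel_additive:
  assumes "u @ [(i, x)] @ v \<in> fp_words Xo I" "y \<in> bm_carrier (Xo i)"
  shows "frag_of (u @ [(i, bm_add (Xo i) x y)] @ v) - frag_of (u @ [(i, x)] @ v)
           - frag_of (u @ [(i, y)] @ v) \<in> fp_rel Xo I"
  by (rule fp_rel.gen) (use assms in \<open>unfold fp_gens_def, blast\<close>)

lemma fp_rel_balanced:
  assumes "u @ [(i, x), (j, y)] @ v \<in> fp_words Xo I"
  shows "frag_of (u @ [(i, bm_rmul (Xo i) x b), (j, y)] @ v)
           - frag_of (u @ [(i, x), (j, bm_lmul (Xo j) b y)] @ v) \<in> fp_rel Xo I"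
  by (rule fp_rel.gen) (use assms in \<open>unfold fp_gens_def, blast\<close>)

lemma fp_words_word_lmul:
  assumes W: "p @ v \<in> fp_words Xo I" and p: "p \<noteq> []" and bm: "\<forall>l\<in>I. bimodule \<iota> (Xo l)"
  shows "word_lmul Xo b p @ v \<in> fp_words Xo I"
proof -
  obtain i0 x0 p' where p': "p = (i0, x0) # p'" using p by (cases p) auto
  have i0: "i0 \<in> I" "x0 \<in> bm_carrier (Xo i0)"
    using fp_words_letterD[of "[]" i0 x0 "p' @ v"] W p' by auto
  show ?thesis
    using fp_words_replace[of "[]" i0 x0 "p' @ v" Xo I] W p'
      bm_lmul_closed[OF bm[rule_format, OF i0(1)] i0(2)]
    by (simp add: word_lmul_def)
qed

lemma fp_rel_word_lmul_additive:
  assumes W: "p @ [(i, x)] @ v \<in> fp_words Xo I" and y: "y \<in> bm_carrier (Xo i)"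
    and bm: "\<forall>l\<in>I. bimodule \<iota> (Xo l)"
  shows "frag_of (word_lmul Xo b (p @ [(i, bm_add (Xo i) x y)] @ v)) - frag_of (word_lmul Xo b (p @ [(i, x)] @ v))
        - frag_of (word_lmul Xo b (p @ [(i, y)] @ v)) \<in> fp_rel Xo I"
proof (cases p)
  case Nil
  have i: "i \<in> I" "x \<in> bm_carrier (Xo i)" using fp_words_letterD[OF W[simplified]] by simp_all
  note Mi = bm[rule_format, OF i(1)]
  have W': "[] @ [(i, bm_lmul (Xo i) b x)] @ v \<in> fp_words Xo I"
    using fp_words_word_lmul[of "[(i, x)]" v, OF _ _ bm] W Nil by (simp add: word_lmul_def)
  show ?thesis
    using fp_rel_additive[OF W' bm_lmul_closed[OF Mi y, of b]] Nil bm_lmul_add[OF Mi i(2) y]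
    by (simp add: word_lmul_def)
next
  case (Cons q p')
  have "word_lmul Xo b (q # p') @ [(i, x)] @ v \<in> fp_words Xo I"
    using fp_words_word_lmul[of "q # p'", OF _ _ bm] W Cons by simp
  from fp_rel_additive[OF this y] show ?thesis
    using Cons by (simp add: word_lmul_def split: prod.splits)
qed

lemma fp_rel_word_lmul_balanced:
  assumes W: "p @ [(i, x), (j, y)] @ v \<in> fp_words Xo I" and bm: "\<forall>l\<in>I. bimodule \<iota> (Xo l)"
  shows "frag_of (word_lmul Xo b (p @ [(i, bm_rmul (Xo i) x c), (j, y)] @ v))
       - frag_of (word_lmul Xo b (p @ [(i, x), (j, bm_lmul (Xo j) c y)] @ v)) \<in> fp_rel Xo I"
proof (cases p)
  case Nil
  have i: "i \<in> I" "x \<in> bm_carrier (Xo i)" using fp_words_letterD[OF W[simplified]] by simp_all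
  have W': "[] @ [(i, bm_lmul (Xo i) b x), (j, y)] @ v \<in> fp_words Xo I"
    using fp_words_word_lmul[of "[(i, x)]" "(j, y) # v", OF _ _ bm] W Nil by (simp add: word_lmul_def)
  show ?thesis
    using fp_rel_balanced[OF W', of c] Nil bm_lmul_rmul[OF bm[rule_format, OF i(1)] i(2)]
    by (simp add: word_lmul_def)
next
  case (Cons q p')
  have "word_lmul Xo b (q # p') @ [(i, x), (j, y)] @ v \<in> fp_words Xo I"
    using fp_words_word_lmul[of "q # p'", OF _ _ bm] W Cons by simp
  from fp_rel_balanced[OF this, of c] show ?thesis
    using Cons by (simp add: word_lmul_def split: prod.splits)
qed

section \<open>The operators \<open>\<lambda>\<^sub>l(a)\<close> and \<open>P\<^sub>l\<close> are well defined\<close>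

lemma lam_word_single: "lam_word Xo l a [(l, x)] = (fst (a (0, x)), frag_of [(l, snd (a (0, x)))])"
  by (simp add: lam_word_def case_prod_beta)

lemma lam_word_Cons_same: "t \<noteq> [] \<Longrightarrow> lam_word Xo l a ((l, x) # t) =
   (0, frag_of (word_lmul Xo (fst (a (0, x))) t) + frag_of ((l, snd (a (0, x))) # t))"
  by (simp add: lam_word_def case_prod_beta)

lemma lam_word_Cons_other: "i \<noteq> l \<Longrightarrow> lam_word Xo l a ((i, x) # t) =
   (0, frag_of (word_lmul Xo (fst (a (1, bm_zero (Xo l)))) ((i, x) # t))
      + frag_of ((l, snd (a (1, bm_zero (Xo l)))) # (i, x) # t))"
  by (simp add: lam_word_def case_prod_beta)

text \<open>The representative of \<open>(b \<oplus> \<eta>) \<otimes> t\<close> for a word \<open>t\<close> not starting with \<open>l\<close>.\<close>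

definition tensor_rep :: "('i \<Rightarrow> ('b::ring_1, 'v, 'z) bimod_scheme) \<Rightarrow> 'i \<Rightarrow> 'b \<Rightarrow> 'v \<Rightarrow> ('i \<times> 'v) list \<Rightarrow> ('b, 'i, 'v) fp_rep" where
  "tensor_rep Xo l b \<eta> t = (0, frag_of (word_lmul Xo b t) + frag_of ((l, \<eta>) # t))"

text \<open>Away from a first letter of colour \<open>l\<close> standing alone, \<open>\<lambda>\<^sub>l(a)\<close> acts on
  \<open>u @ (i, z) # t\<close> as a fixed tensor factor in front of \<open>p @ (i, z) # t\<close>, where \<open>p\<close> is
  \<open>u\<close> with a leading letter of colour \<open>l\<close> removed.\<close>

lemma lam_word_tensor_rep:
  assumes nf: "\<not> (u = [] \<and> i = l)" and W: "u @ (i, x) # v \<in> fp_words Xo I"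
    and a: "a \<in> Lops (Xo l)" and Ml: "bimodule \<iota> (Xo l)"
  obtains \<eta> b p where "\<eta> \<in> bm_carrier (Xo l)"
    "\<And>z t. lam_word Xo l a (u @ (i, z) # t) = tensor_rep Xo l b \<eta> (p @ (i, z) # t)"
    "\<And>z t. u @ (i, z) # t \<in> fp_words Xo I \<Longrightarrow>
        p @ (i, z) # t \<in> fp_words Xo I \<and> l \<noteq> fst (hd (p @ (i, z) # t))"
proof (cases u)
  case Nil
  then have "i \<noteq> l" using nf by simp
  then show ?thesis
    using that[of "snd (a (1, bm_zero (Xo l)))" "fst (a (1, bm_zero (Xo l)))" "[]"]
      Lops_carrier[OF a bm_zero_closed[OF Ml]] Nil
    by (auto simp: lam_word_Cons_other tensor_rep_def)
next
  case (Cons q u')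
  obtain i0 x0 where q: "q = (i0, x0)" by fastforce
  have x0: "x0 \<in> bm_carrier (Xo i0)" using W Cons q unfolding fp_words_iff by auto
  show ?thesis
  proof (cases "i0 = l")
    case True
    show ?thesis
    proof (rule that[of "snd (a (0, x0))" "fst (a (0, x0))" "u'"])
      show "snd (a (0, x0)) \<in> bm_carrier (Xo l)" using Lops_carrier[OF a] x0 True by simp
      show "lam_word Xo l a (u @ (i, z) # t) = tensor_rep Xo l (fst (a (0, x0))) (snd (a (0, x0))) (u' @ (i, z) # t)"
        for z t using True Cons q by (simp add: lam_word_Cons_same tensor_rep_def)
      show "u' @ (i, z) # t \<in> fp_words Xo I \<and> l \<noteq> fst (hd (u' @ (i, z) # t))"
        if "u @ (i, z) # t \<in> fp_words Xo I" for z t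
        using that True Cons q fp_words_ConsD[of "(l, x0)"] by fastforce
    qed
  next
    case False
    then show ?thesis
      using that[of "snd (a (1, bm_zero (Xo l)))" "fst (a (1, bm_zero (Xo l)))" "u"]
        Lops_carrier[OF a bm_zero_closed[OF Ml]] Cons q
      by (auto simp: lam_word_Cons_other tensor_rep_def)
  qed
qed

lemma tensor_rep_additive:
  assumes W: "p @ (i, x) # v \<in> fp_words Xo I" and y: "y \<in> bm_carrier (Xo i)"
    and bm: "\<forall>l\<in>I. bimodule \<iota> (Xo l)" and l: "l \<in> I" "\<eta> \<in> bm_carrier (Xo l)"
    and hd: "l \<noteq> fst (hd (p @ (i, x) # v))"
  shows "tensor_rep Xo l b \<eta> (p @ (i, bm_add (Xo i) x y) # v) - tensor_rep Xo l b \<eta> (p @ (i, x) # v)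
           - tensor_rep Xo l b \<eta> (p @ (i, y) # v) \<in> {0} \<times> fp_rel Xo I"
proof -
  have "frag_of (word_lmul Xo b (p @ [(i, bm_add (Xo i) x y)] @ v)) - frag_of (word_lmul Xo b (p @ [(i, x)] @ v))
        - frag_of (word_lmul Xo b (p @ [(i, y)] @ v)) \<in> fp_rel Xo I"
    using fp_rel_word_lmul_additive[of p i x v Xo I y \<iota> b] W y bm by simp
  moreover have "frag_of (((l, \<eta>) # p) @ [(i, bm_add (Xo i) x y)] @ v) - frag_of (((l, \<eta>) # p) @ [(i, x)] @ v)
        - frag_of (((l, \<eta>) # p) @ [(i, y)] @ v) \<in> fp_rel Xo I"
    using fp_rel_additive[of "(l, \<eta>) # p" i x v Xo I y] fp_words_Cons[OF W l hd] y by simp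
  ultimately show ?thesis by (auto dest: fp_rel.add simp: tensor_rep_def algebra_simps)
qed

lemma tensor_rep_balanced:
  assumes W: "p @ (i, x) # (j, y) # v \<in> fp_words Xo I"
    and bm: "\<forall>l\<in>I. bimodule \<iota> (Xo l)" and l: "l \<in> I" "\<eta> \<in> bm_carrier (Xo l)"
    and hd: "l \<noteq> fst (hd (p @ (i, x) # (j, y) # v))"
  shows "tensor_rep Xo l b \<eta> (p @ (i, bm_rmul (Xo i) x c) # (j, y) # v)
           - tensor_rep Xo l b \<eta> (p @ (i, x) # (j, bm_lmul (Xo j) c y) # v) \<in> {0} \<times> fp_rel Xo I"
proof -
  have "frag_of (word_lmul Xo b (p @ [(i, bm_rmul (Xo i) x c), (j, y)] @ v))
       - frag_of (word_lmul Xo b (p @ [(i, x), (j, bm_lmul (Xo j) c y)] @ v)) \<in> fp_rel Xo I"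
    using fp_rel_word_lmul_balanced[of p i x j y v Xo I \<iota> b c] W bm by simp
  moreover have "frag_of (((l, \<eta>) # p) @ [(i, bm_rmul (Xo i) x c), (j, y)] @ v)
      - frag_of (((l, \<eta>) # p) @ [(i, x), (j, bm_lmul (Xo j) c y)] @ v) \<in> fp_rel Xo I"
    using fp_rel_balanced[of "(l, \<eta>) # p" i x j y v Xo I c] fp_words_Cons[OF W l hd] by simp
  ultimately show ?thesis by (auto dest: fp_rel.add simp: tensor_rep_def algebra_simps)
qed

lemma lam_word_additive_first_letter:
  assumes bm: "\<forall>l\<in>I. bimodule \<iota> (Xo l)" and lI: "l \<in> I" and a: "a \<in> Lops (Xo l)"
    and W: "(l, x) # v \<in> fp_words Xo I" and y: "y \<in> bm_carrier (Xo l)"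
  shows "lam_word Xo l a ((l, bm_add (Xo l) x y) # v) - lam_word Xo l a ((l, x) # v)
           - lam_word Xo l a ((l, y) # v) \<in> {0} \<times> fp_rel Xo I"
proof -
  have x: "x \<in> bm_carrier (Xo l)" using W unfolding fp_words_iff by simp
  have a_add: "a (0, bm_add (Xo l) x y) =
      (fst (a (0, x)) + fst (a (0, y)), bm_add (Xo l) (snd (a (0, x))) (snd (a (0, y))))"
    using Lops_add[OF a x y, of 0 0] by simp
  have ax: "snd (a (0, x)) \<in> bm_carrier (Xo l)" "snd (a (0, y)) \<in> bm_carrier (Xo l)"
    using Lops_carrier[OF a] x y by auto
  show ?thesis
  proof (cases v)
    case Nil
    have "[] @ [(l, snd (a (0, x)))] @ [] \<in> fp_words Xo I"
      using lI ax unfolding fp_words_iff by simp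
    from fp_rel_additive[OF this ax(2)] show ?thesis
      using Nil by (simp add: lam_word_single a_add)
  next
    case (Cons q v')
    obtain j t where q: "q = (j, t)" by fastforce
    have Wv: "(j, t) # v' \<in> fp_words Xo I" and lj: "l \<noteq> j"
      using fp_words_ConsD[of "(l, x)" "(j, t) # v'"] W Cons q by auto
    have t: "j \<in> I" "t \<in> bm_carrier (Xo j)" using Wv unfolding fp_words_iff by auto
    note Mj = bm[rule_format, OF t(1)]
    have "[] @ [(j, bm_lmul (Xo j) (fst (a (0, x))) t)] @ v' \<in> fp_words Xo I"
      using fp_words_replace[of "[]" j t v' Xo I] Wv bm_lmul_closed[OF Mj t(2)] by simp
    note rel_tail = fp_rel_additive[OF this bm_lmul_closed[OF Mj t(2), of "fst (a (0, y))"]]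
    have "[] @ [(l, snd (a (0, x)))] @ (j, t) # v' \<in> fp_words Xo I"
      using fp_words_Cons[OF Wv lI ax(1)] lj by simp
    note rel_head = fp_rel_additive[OF this ax(2)]
    show ?thesis using fp_rel.add[OF rel_tail rel_head] Cons q
      by (simp add: lam_word_Cons_same a_add word_lmul_def bm_lmul_add_scalar[OF Mj t(2)] algebra_simps)
  qed
qed

lemma lam_word_balanced_first_letter:
  assumes bm: "\<forall>l\<in>I. bimodule \<iota> (Xo l)" and lI: "l \<in> I" and a: "a \<in> Lops (Xo l)"
    and W: "(l, x) # (j, y) # v \<in> fp_words Xo I"
  shows "lam_word Xo l a ((l, bm_rmul (Xo l) x c) # (j, y) # v)
           - lam_word Xo l a ((l, x) # (j, bm_lmul (Xo j) c y) # v) \<in> {0} \<times> fp_rel Xo I"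
proof -
  have x: "x \<in> bm_carrier (Xo l)" using W unfolding fp_words_iff by simp
  have y: "j \<in> I" "y \<in> bm_carrier (Xo j)" using W unfolding fp_words_iff by auto
  have a_rmul: "a (0, bm_rmul (Xo l) x c) = (fst (a (0, x)) * c, bm_rmul (Xo l) (snd (a (0, x))) c)"
    using Lops_rmul[OF a x, of 0 c] by simp
  have ax: "snd (a (0, x)) \<in> bm_carrier (Xo l)" using Lops_carrier[OF a] x by auto
  have Wv: "(j, y) # v \<in> fp_words Xo I" and lj: "l \<noteq> j"
    using fp_words_ConsD[of "(l, x)" "(j, y) # v"] W by auto
  have "[] @ [(l, snd (a (0, x))), (j, y)] @ v \<in> fp_words Xo I"
    using fp_words_Cons[OF Wv lI ax] lj by simp
  from fp_rel_balanced[OF this, of c] show ?thesis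
    by (simp add: lam_word_Cons_same a_rmul word_lmul_def algebra_simps
        bm_lmul_mult[OF bm[rule_format, OF y(1)] y(2)])
qed

lemma respects_fp_rel_lam_word:
  assumes bm: "\<forall>l\<in>I. bimodule \<iota> (Xo l)" and lI: "l \<in> I" and a: "a \<in> Lops (Xo l)"
  shows "respects_fp_rel Xo I (lam_word Xo l a)"
  unfolding respects_fp_rel_def
proof
  fix g assume "g \<in> fp_gens Xo I"
  note Ml = bm[rule_format, OF lI]
  let ?L = "lam_word Xo l a"
  show "word_extend ?L g \<in> {0} \<times> fp_rel Xo I"
    using \<open>g \<in> fp_gens Xo I\<close> unfolding fp_gens_def
  proof (elim UnE CollectE exE conjE)
    fix u v i x y
    assume g: "g = frag_of (u @ [(i, bm_add (Xo i) x y)] @ v) - frag_of (u @ [(i, x)] @ v) - frag_of (u @ [(i, y)] @ v)"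
      and W: "u @ [(i, x)] @ v \<in> fp_words Xo I" and y: "y \<in> bm_carrier (Xo i)"
    have "word_extend ?L g = ?L (u @ (i, bm_add (Xo i) x y) # v) - ?L (u @ (i, x) # v) - ?L (u @ (i, y) # v)"
      by (simp add: g word_extend_diff word_extend_frag_of)
    moreover have "\<dots> \<in> {0} \<times> fp_rel Xo I"
    proof (cases "u = [] \<and> i = l")
      case True
      then show ?thesis using lam_word_additive_first_letter[OF bm lI a, of x v y] W y by simp
    next
      case False
      obtain \<eta> b p where \<eta>: "\<eta> \<in> bm_carrier (Xo l)"
        and L: "\<And>z t. ?L (u @ (i, z) # t) = tensor_rep Xo l b \<eta> (p @ (i, z) # t)"
        and V: "\<And>z t. u @ (i, z) # t \<in> fp_words Xo I \<Longrightarrow>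
                   p @ (i, z) # t \<in> fp_words Xo I \<and> l \<noteq> fst (hd (p @ (i, z) # t))"
        using lam_word_tensor_rep[OF False W[simplified] a Ml] by metis
      show ?thesis unfolding L using tensor_rep_additive[OF _ y bm lI \<eta>] V W by simp
    qed
    ultimately show ?thesis by simp
  next
    fix u v i x j y c
    assume g: "g = frag_of (u @ [(i, bm_rmul (Xo i) x c), (j, y)] @ v) - frag_of (u @ [(i, x), (j, bm_lmul (Xo j) c y)] @ v)"
      and W: "u @ [(i, x), (j, y)] @ v \<in> fp_words Xo I"
    have "word_extend ?L g = ?L (u @ (i, bm_rmul (Xo i) x c) # (j, y) # v) - ?L (u @ (i, x) # (j, bm_lmul (Xo j) c y) # v)"
      by (simp add: g word_extend_diff word_extend_frag_of)
    moreover have "\<dots> \<in> {0} \<times> fp_rel Xo I"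
    proof (cases "u = [] \<and> i = l")
      case True
      then show ?thesis using lam_word_balanced_first_letter[OF bm lI a, of x j y v c] W by simp
    next
      case False
      obtain \<eta> b p where \<eta>: "\<eta> \<in> bm_carrier (Xo l)"
        and L: "\<And>z t. ?L (u @ (i, z) # t) = tensor_rep Xo l b \<eta> (p @ (i, z) # t)"
        and V: "\<And>z t. u @ (i, z) # t \<in> fp_words Xo I \<Longrightarrow>
                   p @ (i, z) # t \<in> fp_words Xo I \<and> l \<noteq> fst (hd (p @ (i, z) # t))"
        using lam_word_tensor_rep[OF False W[simplified] a Ml] by metis
      show ?thesis unfolding L using tensor_rep_balanced[OF _ bm lI \<eta>] V W by simp
    qed
    ultimately show ?thesis by simp
  qed
qed

definition proj_word :: "'i \<Rightarrow> ('i \<times> 'v) list \<Rightarrow> ('b::ring_1, 'i, 'v) fp_rep" where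
  "proj_word l w = (if length w = 1 \<and> fst (hd w) = l then (0, frag_of w) else 0)"

lemma respects_fp_rel_proj_word: "respects_fp_rel Xo I (proj_word l)"
  unfolding respects_fp_rel_def
proof
  fix g assume "g \<in> fp_gens Xo I"
  then show "word_extend (proj_word l) g \<in> {0} \<times> fp_rel Xo I"
    unfolding fp_gens_def
  proof (elim UnE CollectE exE conjE)
    fix u v i x y
    assume g: "g = frag_of (u @ [(i, bm_add (Xo i) x y)] @ v) - frag_of (u @ [(i, x)] @ v) - frag_of (u @ [(i, y)] @ v)"
      and W: "u @ [(i, x)] @ v \<in> fp_words Xo I" and y: "y \<in> bm_carrier (Xo i)"
    show ?thesis
    proof (cases "u = [] \<and> v = [] \<and> i = l")
      case True
      then show ?thesis using fp_rel_additive[OF W y] g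
        by (simp add: word_extend_diff word_extend_frag_of proj_word_def)
    next
      case False
      then show ?thesis using g
        by (auto simp: word_extend_diff word_extend_frag_of proj_word_def fp_rel.zero zero_prod_def)
    qed
  next
    fix u v i x j y c
    assume "g = frag_of (u @ [(i, bm_rmul (Xo i) x c), (j, y)] @ v) - frag_of (u @ [(i, x), (j, bm_lmul (Xo j) c y)] @ v)"
    then show ?thesis
      by (auto simp: word_extend_diff word_extend_frag_of proj_word_def fp_rel.zero zero_prod_def)
  qed
qed

abbreviation lam_rep where "lam_rep Xo l a \<equiv> rep_extend (lam_B l a Xo) (lam_word Xo l a)"
abbreviation proj_rep where "proj_rep l \<equiv> rep_extend (\<lambda>b. (b, 0)) (proj_word l)"

lemma fp_lambda_fp_cls:
  assumes "\<forall>l\<in>I. bimodule \<iota> (Xo l)" "l \<in> I" "a \<in> Lops (Xo l)"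
  shows "fp_lambda Xo I l a (fp_cls Xo I r) = fp_cls Xo I (lam_rep Xo l a r)"
  unfolding fp_lambda_def by (rule fp_lift_fp_cls[OF respects_fp_rel_lam_word[OF assms]])

lemma fp_P_fp_cls: "fp_P Xo I l (fp_cls Xo I r) = fp_cls Xo I (proj_rep l r)"
proof -
  have "fp_P Xo I l = fp_lift Xo I (proj_rep l)" unfolding fp_P_def proj_word_def[abs_def] ..
  then show ?thesis by (simp add: fp_lift_fp_cls[OF respects_fp_rel_proj_word])
qed

section \<open>The action on the summand \<open>B \<oplus> Xo\<^sub>l\<close>\<close>

definition summand_rep :: "'i \<Rightarrow> 'b \<times> 'v \<Rightarrow> ('b::ring_1, 'i, 'v) fp_rep" where
  "summand_rep l z = (fst z, frag_of [(l, snd z)])"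

lemma fp_cls_B_eq_summand:
  assumes Ml: "bimodule \<iota> (Xo l)" and lI: "l \<in> I"
  shows "fp_cls Xo I (c, 0) = fp_cls Xo I (summand_rep l (c, bm_zero (Xo l)))"
proof (rule fp_cls_eqI)
  note z = bm_zero_closed[OF Ml]
  have "[] @ [(l, bm_zero (Xo l))] @ [] \<in> fp_words Xo I"
    using lI z unfolding fp_words_iff by simp
  from fp_rel_additive[OF this z] show "snd (c, 0) - snd (summand_rep l (c, bm_zero (Xo l))) \<in> fp_rel Xo I"
    by (simp add: summand_rep_def bm_add_zero_left[OF Ml z])
qed (simp add: summand_rep_def)

lemma lam_rep_summand:
  assumes bm: "\<forall>l\<in>I. bimodule \<iota> (Xo l)" and lI: "l \<in> I" and a: "a \<in> Lops (Xo l)"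
    and x: "x \<in> bm_carrier (Xo l)"
  shows "fp_cls Xo I (lam_rep Xo l a (summand_rep l (b, x))) = fp_cls Xo I (summand_rep l (a (b, x)))"
proof (rule fp_cls_eqI)
  note Ml = bm[rule_format, OF lI]
  let ?z = "bm_zero (Xo l)"
  have a_split: "a (b, x) = (fst (a (b, ?z)) + fst (a (0, x)), bm_add (Xo l) (snd (a (b, ?z))) (snd (a (0, x))))"
    using Lops_add[OF a bm_zero_closed[OF Ml] x, of b 0] bm_add_zero_left[OF Ml x] by simp
  have ax: "snd (a (b, ?z)) \<in> bm_carrier (Xo l)" "snd (a (0, x)) \<in> bm_carrier (Xo l)"
    using Lops_carrier[OF a] bm_zero_closed[OF Ml] x by auto
  have L: "lam_rep Xo l a (b, frag_of [(l, x)]) = (fst (a (b, ?z)) + fst (a (0, x)),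
             frag_of [(l, snd (a (b, ?z)))] + frag_of [(l, snd (a (0, x)))])"
    by (simp add: rep_extend_eq word_extend_frag_of lam_word_single lam_B_def case_prod_beta)
  show "fst (lam_rep Xo l a (summand_rep l (b, x))) = fst (summand_rep l (a (b, x)))"
    by (simp add: summand_rep_def L a_split)
  have "[] @ [(l, snd (a (b, ?z)))] @ [] \<in> fp_words Xo I" using lI ax unfolding fp_words_iff by simp
  from fp_rel.neg[OF fp_rel_additive[OF this ax(2)]]
  show "snd (lam_rep Xo l a (summand_rep l (b, x))) - snd (summand_rep l (a (b, x))) \<in> fp_rel Xo I"
    by (simp add: L summand_rep_def a_split algebra_simps)
qed

lemma proj_rep_summand: "proj_rep l (summand_rep l z) = summand_rep l z"
  by (simp add: rep_extend_eq summand_rep_def word_extend_frag_of proj_word_def)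

definition right_linear_on :: "('b::ring_1, 'v, 'z) bimod_scheme \<Rightarrow> ('b \<times> 'v \<Rightarrow> 'b \<times> 'v) \<Rightarrow> bool" where
  "right_linear_on M f \<longleftrightarrow> (\<forall>b x. x \<in> bm_carrier M \<longrightarrow> snd (f (b, x)) \<in> bm_carrier M
      \<and> (\<forall>c. f (b * c, bm_rmul M x c) = (fst (f (b, x)) * c, bm_rmul M (snd (f (b, x))) c)))"

lemma right_linear_on_Lops: "a \<in> Lops M \<Longrightarrow> right_linear_on M a"
  unfolding right_linear_on_def by (intro allI impI conjI Lops_carrier Lops_rmul) assumption+

lemma right_linear_on_id: "right_linear_on M id"
  by (simp add: right_linear_on_def)

lemma right_linear_on_comp:
  assumes f: "right_linear_on M f" and g: "right_linear_on M g"
  shows "right_linear_on M (f \<circ> g)"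
  unfolding right_linear_on_def
proof (intro allI impI conjI)
  fix b x assume x: "x \<in> bm_carrier M"
  obtain b' x' where gx: "g (b, x) = (b', x')" by fastforce
  have x': "x' \<in> bm_carrier M" and gc: "\<And>c. g (b * c, bm_rmul M x c) = (b' * c, bm_rmul M x' c)"
    using g x gx unfolding right_linear_on_def by (metis fst_conv snd_conv)+
  show "snd ((f \<circ> g) (b, x)) \<in> bm_carrier M"
    using f x' gx unfolding right_linear_on_def by simp
  show "(f \<circ> g) (b * c, bm_rmul M x c) = (fst ((f \<circ> g) (b, x)) * c, bm_rmul M (snd ((f \<circ> g) (b, x))) c)" for c
    using f x' gx gc unfolding right_linear_on_def by simp
qed

lemma A_generator_on_summand:
  assumes bm: "\<forall>l\<in>I. bimodule \<iota> (Xo l)" and lI: "l \<in> I" and M: "M \<in> A_free Xo I l \<union> A_bool Xo I l"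
  obtains a where "a \<in> Lops (Xo l)"
    "\<And>b x. x \<in> bm_carrier (Xo l) \<Longrightarrow> M (fp_cls Xo I (summand_rep l (b, x))) = fp_cls Xo I (summand_rep l (a (b, x)))"
proof -
  obtain a where a: "a \<in> Lops (Xo l)"
    and M_cases: "M = fp_lambda Xo I l a \<or> M = fp_P Xo I l \<circ> fp_lambda Xo I l a \<circ> fp_P Xo I l"
    using M unfolding A_free_def A_bool_def by blast
  have P: "fp_P Xo I l (fp_cls Xo I (summand_rep l z)) = fp_cls Xo I (summand_rep l z)" for z
    by (simp only: fp_P_fp_cls proj_rep_summand)
  show ?thesis
  proof (rule that[OF a])
    fix b x assume x: "x \<in> bm_carrier (Xo l)"
    have L: "fp_lambda Xo I l a (fp_cls Xo I (summand_rep l (b, x))) = fp_cls Xo I (summand_rep l (a (b, x)))"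
      unfolding fp_lambda_fp_cls[OF bm lI a] by (rule lam_rep_summand[OF bm lI a x])
    from M_cases show "M (fp_cls Xo I (summand_rep l (b, x))) = fp_cls Xo I (summand_rep l (a (b, x)))"
      by (elim disjE) (simp only: L P comp_apply)+
  qed
qed

lemma A_product_on_summand:
  assumes bm: "\<forall>l\<in>I. bimodule \<iota> (Xo l)" and lI: "l \<in> I"
    and "set as \<subseteq> A_free Xo I l \<union> A_bool Xo I l"
  shows "\<exists>f. right_linear_on (Xo l) f \<and> (\<forall>b x. x \<in> bm_carrier (Xo l) \<longrightarrow>
           foldr (\<circ>) as id (fp_cls Xo I (summand_rep l (b, x))) = fp_cls Xo I (summand_rep l (f (b, x))))"
  using assms(3)
proof (induction as)
  case Nil
  show ?case using right_linear_on_id by fastforce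
next
  case (Cons M as)
  have "set as \<subseteq> A_free Xo I l \<union> A_bool Xo I l" using Cons.prems by simp
  then obtain g where g: "right_linear_on (Xo l) g"
    "\<And>b x. x \<in> bm_carrier (Xo l) \<Longrightarrow>
       foldr (\<circ>) as id (fp_cls Xo I (summand_rep l (b, x))) = fp_cls Xo I (summand_rep l (g (b, x)))"
    using Cons.IH by blast
  obtain a where a: "a \<in> Lops (Xo l)"
    "\<And>b x. x \<in> bm_carrier (Xo l) \<Longrightarrow> M (fp_cls Xo I (summand_rep l (b, x))) = fp_cls Xo I (summand_rep l (a (b, x)))"
    using A_generator_on_summand[OF bm lI] Cons.prems by auto
  have "foldr (\<circ>) (M # as) id (fp_cls Xo I (summand_rep l (b, x))) = fp_cls Xo I (summand_rep l ((a \<circ> g) (b, x)))"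
    if x: "x \<in> bm_carrier (Xo l)" for b x
  proof -
    have "snd (g (b, x)) \<in> bm_carrier (Xo l)" using g(1) x unfolding right_linear_on_def by blast
    from a(2)[OF this, of "fst (g (b, x))"] show ?thesis by (simp add: g(2)[OF x])
  qed
  then show ?case using right_linear_on_comp[OF right_linear_on_Lops[OF a(1)] g(1)] by blast
qed

section \<open>Boolean products annihilate \<open>Xo\<^sub>j\<close> for \<open>j \<noteq> l\<close>\<close>

text \<open>For \<open>j \<noteq> l\<close>, the span of \<open>Xo\<^sub>j\<close> and \<open>Xo\<^sub>l \<otimes> Xo\<^sub>j\<close> is mapped into itself by every
  \<open>\<lambda>\<^sub>l(a)\<close> and annihilated by \<open>P\<^sub>l\<close>.\<close>

definition junk :: "'i \<Rightarrow> 'i \<Rightarrow> (('i \<times> 'v) list \<Rightarrow>\<^sub>0 int) set" where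
  "junk j l = {h. Poly_Mapping.keys h \<subseteq> {w. (\<exists>x. w = [(j, x)]) \<or> (\<exists>y x. w = [(l, y), (j, x)])}}"

definition junk_stable :: "'i \<Rightarrow> 'i \<Rightarrow> (('b::ring_1, 'i, 'v) fp_rep \<Rightarrow> ('b, 'i, 'v) fp_rep) \<Rightarrow> bool" where
  "junk_stable j l F \<longleftrightarrow> (\<forall>r h. h \<in> junk j l \<longrightarrow> (\<exists>h'\<in>junk j l. F (r + (0, h)) = F r + (0, h')))"

definition junk_killing :: "'i \<Rightarrow> 'i \<Rightarrow> (('b::ring_1, 'i, 'v) fp_rep \<Rightarrow> ('b, 'i, 'v) fp_rep) \<Rightarrow> bool" where
  "junk_killing j l F \<longleftrightarrow> (\<forall>r h. h \<in> junk j l \<longrightarrow> F (r + (0, h)) = F r)"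

lemma zero_in_junk: "0 \<in> junk j l"
  by (simp add: junk_def)

lemma junk_stable_comp: "junk_stable j l F \<Longrightarrow> junk_stable j l G \<Longrightarrow> junk_stable j l (G \<circ> F)"
  unfolding junk_stable_def by (metis comp_apply)

lemma junk_killing_imp_stable: "junk_killing j l F \<Longrightarrow> junk_stable j l F"
  unfolding junk_killing_def junk_stable_def using zero_in_junk
  by (metis add.right_neutral zero_prod_def)

lemma junk_killing_comp_left: "junk_killing j l F \<Longrightarrow> junk_killing j l (G \<circ> F)"
  unfolding junk_killing_def by simp

lemma junk_killing_comp_right: "junk_stable j l F \<Longrightarrow> junk_killing j l G \<Longrightarrow> junk_killing j l (G \<circ> F)"
  unfolding junk_stable_def junk_killing_def by (metis comp_apply)

lemma junk_stable_lam_rep: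
  fixes Xo :: "'i \<Rightarrow> ('b::ring_1, 'v, 'z) bimod_scheme"
  assumes jl: "j \<noteq> l"
  shows "junk_stable j l (lam_rep Xo l a)"
  unfolding junk_stable_def
proof (intro allI impI)
  fix r and h :: "('i \<times> 'v) list \<Rightarrow>\<^sub>0 int" assume h: "h \<in> junk j l"
  let ?J = "{w. (\<exists>x. w = [(j, x)]) \<or> (\<exists>y x. w = [(l, y), (j, x)])}"
  have fst0: "fst (lam_word Xo l a w) = 0" if "w \<in> ?J" for w
    using that jl by (auto simp: lam_word_Cons_same lam_word_Cons_other)
  have keys2: "Poly_Mapping.keys (frag_of w1 + frag_of w2) \<subseteq> {w1, w2}" for w1 w2 :: "('i \<times> 'v) list"
    using keys_add[of "frag_of w1" "frag_of w2"] by auto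
  have keys_J: "Poly_Mapping.keys (snd (lam_word Xo l a w)) \<subseteq> ?J" if "w \<in> ?J" for w
    using that jl by (auto simp: lam_word_Cons_same lam_word_Cons_other word_lmul_def dest!: set_mp[OF keys2])
  have "fst (word_extend (lam_word Xo l a) h) = 0"
    unfolding word_extend_def using h fst0 by (auto simp: junk_def intro!: sum.neutral)
  moreover have "snd (word_extend (lam_word Xo l a) h) \<in> junk j l"
  proof -
    have "(\<Union>w\<in>Poly_Mapping.keys h. Poly_Mapping.keys (snd (lam_word Xo l a w))) \<subseteq> ?J"
      using h keys_J unfolding junk_def by blast
    then show ?thesis
      unfolding word_extend_def junk_def using keys_frag_extend[of "\<lambda>w. snd (lam_word Xo l a w)" h] by simp
  qed
  ultimately show "\<exists>h'\<in>junk j l. lam_rep Xo l a (r + (0, h)) = lam_rep Xo l a r + (0, h')"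
    by (intro bexI[of _ "snd (word_extend (lam_word Xo l a) h)"])
      (auto simp: rep_extend_eq word_extend_add prod_eq_iff)
qed

lemma junk_killing_proj_rep:
  assumes jl: "j \<noteq> l"
  shows "junk_killing j l (proj_rep l :: ('b::ring_1, 'i, 'v) fp_rep \<Rightarrow> _)"
  unfolding junk_killing_def
proof (intro allI impI)
  fix r and h :: "('i \<times> 'v) list \<Rightarrow>\<^sub>0 int" assume "h \<in> junk j l"
  then have "word_extend (proj_word l) h = 0"
    unfolding word_extend_def using jl
    by (auto simp: junk_def proj_word_def zero_prod_def intro!: sum.neutral frag_extend_eq_0)
  then show "proj_rep l (r + (0, h)) = proj_rep l r" by (simp add: rep_extend_eq word_extend_add)
qed

lemma A_generator_rep:
  fixes Xo :: "'i \<Rightarrow> ('b::ring_1, 'v, 'z) bimod_scheme"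
  assumes bm: "\<forall>l\<in>I. bimodule \<iota> (Xo l)" and lI: "l \<in> I" and jl: "j \<noteq> l"
    and M: "M \<in> A_free Xo I l \<union> A_bool Xo I l"
  obtains G where "\<And>r. M (fp_cls Xo I r) = fp_cls Xo I (G r)" "junk_stable j l G"
    "M \<in> A_bool Xo I l \<Longrightarrow> junk_killing j l G"
proof (cases "M \<in> A_bool Xo I l")
  case True
  then obtain a where a: "a \<in> Lops (Xo l)" and Ma: "M = fp_P Xo I l \<circ> fp_lambda Xo I l a \<circ> fp_P Xo I l"
    unfolding A_bool_def by blast
  have K: "junk_killing j l (proj_rep l \<circ> lam_rep Xo l a \<circ> proj_rep l)"
    by (rule junk_killing_comp_left[OF junk_killing_proj_rep[OF jl]])
  show ?thesis
  proof (rule that)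
    show "M (fp_cls Xo I r) = fp_cls Xo I ((proj_rep l \<circ> lam_rep Xo l a \<circ> proj_rep l) r)" for r
      by (simp add: Ma fp_P_fp_cls fp_lambda_fp_cls[OF bm lI a])
    show "junk_stable j l (proj_rep l \<circ> lam_rep Xo l a \<circ> proj_rep l)"
      by (rule junk_killing_imp_stable[OF K])
    show "junk_killing j l (proj_rep l \<circ> lam_rep Xo l a \<circ> proj_rep l)" by (rule K)
  qed
next
  case False
  then obtain a where a: "a \<in> Lops (Xo l)" and Ma: "M = fp_lambda Xo I l a"
    using M unfolding A_free_def by blast
  show ?thesis
  proof (rule that)
    show "M (fp_cls Xo I r) = fp_cls Xo I (lam_rep Xo l a r)" for r
      by (simp add: Ma fp_lambda_fp_cls[OF bm lI a])
    show "junk_stable j l (lam_rep Xo l a)" by (rule junk_stable_lam_rep[OF jl])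
    show "junk_killing j l (lam_rep Xo l a)" if "M \<in> A_bool Xo I l" using False that by blast
  qed
qed

lemma A_product_rep:
  fixes Xo :: "'i \<Rightarrow> ('b::ring_1, 'v, 'z) bimod_scheme"
  assumes bm: "\<forall>l\<in>I. bimodule \<iota> (Xo l)" and lI: "l \<in> I" and jl: "j \<noteq> l"
    and "set as \<subseteq> A_free Xo I l \<union> A_bool Xo I l"
  shows "\<exists>F. (\<forall>r. foldr (\<circ>) as id (fp_cls Xo I r) = fp_cls Xo I (F r)) \<and> junk_stable j l F
           \<and> ((\<exists>M\<in>set as. M \<in> A_bool Xo I l) \<longrightarrow> junk_killing j l F)"
  using assms(4)
proof (induction as)
  case Nil
  show ?case by (intro exI[of _ id]) (auto simp: junk_stable_def)
next
  case (Cons M as)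
  have "set as \<subseteq> A_free Xo I l \<union> A_bool Xo I l" using Cons.prems by simp
  then obtain F where F: "\<And>r. foldr (\<circ>) as id (fp_cls Xo I r) = fp_cls Xo I (F r)"
    "junk_stable j l F" "(\<exists>M\<in>set as. M \<in> A_bool Xo I l) \<Longrightarrow> junk_killing j l F"
    using Cons.IH by blast
  obtain G where G: "\<And>r. M (fp_cls Xo I r) = fp_cls Xo I (G r)" "junk_stable j l G"
    "M \<in> A_bool Xo I l \<Longrightarrow> junk_killing j l G"
    using A_generator_rep[OF bm lI jl, of M] Cons.prems by auto
  have "foldr (\<circ>) (M # as) id (fp_cls Xo I r) = fp_cls Xo I ((G \<circ> F) r)" for r
    by (simp add: F(1) G(1))
  moreover have "(\<exists>M'\<in>set (M # as). M' \<in> A_bool Xo I l) \<Longrightarrow> junk_killing j l (G \<circ> F)"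
    using junk_killing_comp_left[OF F(3)] junk_killing_comp_right[OF F(2) G(3)] by auto
  ultimately show ?case using junk_stable_comp[OF F(2) G(2)] by blast
qed

section \<open>Expectation of alternating products\<close>

lemma boolean_product_on_B:
  assumes bm: "\<forall>l\<in>I. bimodule \<iota> (Xo l)" and lI: "l \<in> I" and bp: "boolean_product Xo I l A"
  obtains \<xi> where "\<xi> \<in> bm_carrier (Xo l)"
    "\<And>c. A (fp_cls Xo I (c, 0)) = fp_cls Xo I (summand_rep l (fp_E Xo I A * c, bm_rmul (Xo l) \<xi> c))"
proof -
  note Ml = bm[rule_format, OF lI]
  let ?z = "bm_zero (Xo l)"
  obtain as where as: "set as \<subseteq> A_free Xo I l \<union> A_bool Xo I l" "A = foldr (\<circ>) as id"
    using bp unfolding boolean_product_def by blast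
  obtain g where g: "right_linear_on (Xo l) g"
    "\<And>b x. x \<in> bm_carrier (Xo l) \<Longrightarrow> A (fp_cls Xo I (summand_rep l (b, x))) = fp_cls Xo I (summand_rep l (g (b, x)))"
    using A_product_on_summand[OF bm lI as(1)] as(2) by blast
  have \<xi>: "snd (g (1, ?z)) \<in> bm_carrier (Xo l)"
    and g_lin: "g (1 * c, bm_rmul (Xo l) ?z c) = (fst (g (1, ?z)) * c, bm_rmul (Xo l) (snd (g (1, ?z))) c)" for c
    using g(1) bm_zero_closed[OF Ml] unfolding right_linear_on_def by blast+
  have A_B: "A (fp_cls Xo I (c, 0)) = fp_cls Xo I (summand_rep l (fst (g (1, ?z)) * c, bm_rmul (Xo l) (snd (g (1, ?z))) c))" for c
    using fp_cls_B_eq_summand[where Xo=Xo and c=c, OF Ml lI] g(2)[OF bm_zero_closed[OF Ml], of c] g_lin[of c]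
    by (simp add: bm_rmul_zero[OF Ml])
  have "fp_E Xo I A = fst (g (1, ?z))"
    unfolding fp_E_def A_B[of 1] fp_p_fp_cls by (simp add: summand_rep_def)
  then show ?thesis using that[OF \<xi>] A_B by simp
qed

lemma boolean_product_on_other_summand:
  assumes bm: "\<forall>l\<in>I. bimodule \<iota> (Xo l)" and lI: "l \<in> I" and bp: "boolean_product Xo I l A"
    and jl: "j \<noteq> l"
  obtains \<xi>' where "\<xi>' \<in> bm_carrier (Xo l)"
    "A (fp_cls Xo I (summand_rep j (c, x))) = fp_cls Xo I (summand_rep l (fp_E Xo I A * c, \<xi>'))"
proof -
  obtain as where as: "set as \<subseteq> A_free Xo I l \<union> A_bool Xo I l" "\<exists>M\<in>set as. M \<in> A_bool Xo I l"
    "A = foldr (\<circ>) as id"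
    using bp unfolding boolean_product_def by blast
  obtain F where F: "\<And>r. A (fp_cls Xo I r) = fp_cls Xo I (F r)" "junk_killing j l F"
    using A_product_rep[OF bm lI jl as(1)] as(2,3) by blast
  have "frag_of [(j, x)] \<in> junk j l" by (simp add: junk_def)
  then have "F ((c, 0) + (0, frag_of [(j, x)])) = F (c, 0)"
    using F(2) unfolding junk_killing_def by blast
  then have A_j: "A (fp_cls Xo I (summand_rep j (c, x))) = A (fp_cls Xo I (c, 0))"
    by (simp add: F(1) summand_rep_def)
  show ?thesis
  proof (rule boolean_product_on_B[OF bm lI bp])
    fix \<xi> assume \<xi>: "\<xi> \<in> bm_carrier (Xo l)"
      and A_B: "\<And>c. A (fp_cls Xo I (c, 0)) = fp_cls Xo I (summand_rep l (fp_E Xo I A * c, bm_rmul (Xo l) \<xi> c))"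
    show ?thesis by (rule that[OF bm_rmul_closed[OF bm[rule_format, OF lI] \<xi>]]) (simp add: A_j A_B)
  qed
qed

lemma alternating_boolean_products_on_unit:
  assumes bm: "\<forall>l\<in>I. bimodule \<iota> (Xo l)"
    and "list_all2 (\<lambda>l A. l \<in> I \<and> boolean_product Xo I l A) ks As"
    and "successively (\<noteq>) ks" and "ks \<noteq> []"
  shows "\<exists>\<xi>\<in>bm_carrier (Xo (hd ks)). foldr (\<circ>) As id (fp_cls Xo I (1, 0))
           = fp_cls Xo I (summand_rep (hd ks) (prod_list (map (fp_E Xo I) As), \<xi>))"
  using assms(2-4)
proof (induction ks As rule: list_all2_induct)
  case (Cons l ks A As)
  then have lI: "l \<in> I" and bp: "boolean_product Xo I l A" by auto
  show ?case
  proof (cases "ks = []")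
    case True
    then have "As = []" using Cons.hyps(2) by simp
    show ?thesis
    proof (rule boolean_product_on_B[OF bm lI bp])
      fix \<xi> assume \<xi>: "\<xi> \<in> bm_carrier (Xo l)"
        and A_B: "\<And>c. A (fp_cls Xo I (c, 0)) = fp_cls Xo I (summand_rep l (fp_E Xo I A * c, bm_rmul (Xo l) \<xi> c))"
      show ?thesis
        using A_B[of 1] bm_rmul_closed[OF bm[rule_format, OF lI] \<xi>] \<open>ks = []\<close> \<open>As = []\<close> by auto
    qed
  next
    case False
    then have "hd ks \<noteq> l" and "successively (\<noteq>) ks"
      using Cons.prems(1) by (auto simp: successively_Cons)
    with Cons.IH False obtain \<xi> where \<xi>: "foldr (\<circ>) As id (fp_cls Xo I (1, 0))
        = fp_cls Xo I (summand_rep (hd ks) (prod_list (map (fp_E Xo I) As), \<xi>))"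
      by blast
    show ?thesis
    proof (rule boolean_product_on_other_summand[OF bm lI bp \<open>hd ks \<noteq> l\<close>])
      fix \<xi>' assume "\<xi>' \<in> bm_carrier (Xo l)" and "A (fp_cls Xo I (summand_rep (hd ks)
          (prod_list (map (fp_E Xo I) As), \<xi>))) = fp_cls Xo I (summand_rep l (fp_E Xo I A * prod_list (map (fp_E Xo I) As), \<xi>'))"
      then have "foldr (\<circ>) (A # As) id (fp_cls Xo I (1, 0))
          = fp_cls Xo I (summand_rep l (prod_list (map (fp_E Xo I) (A # As)), \<xi>'))"
        by (simp add: \<xi>)
      with \<open>\<xi>' \<in> bm_carrier (Xo l)\<close> show ?thesis unfolding list.sel(1) by blast
    qed
  qed
qed simp

theorem corollary6p4:
  fixes \<iota> :: "complex \<Rightarrow> 'b::ring_1"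
    and Xo :: "'i \<Rightarrow> ('b, 'v) bimod"
    and I :: "'i set"
    and m :: nat
    and k :: "nat \<Rightarrow> 'i"
    and A :: "nat \<Rightarrow> ('b, 'i, 'v) fp_elem \<Rightarrow> ('b, 'i, 'v) fp_elem"
  assumes "complex_algebra \<iota>"
    and "\<forall>l\<in>I. bimodule \<iota> (Xo l)"
    and "\<forall>i<m. k i \<in> I"
    and "\<forall>i. Suc i < m \<longrightarrow> k i \<noteq> k (Suc i)"
    and "\<forall>i<m. boolean_product Xo I (k i) (A i)"
  shows "fp_E Xo I (foldr (\<circ>) (map A [0..<m]) id)
           = prod_list (map (\<lambda>i. fp_E Xo I (A i)) [0..<m])"
proof (cases "m = 0")
  case True
  then show ?thesis by (simp add: fp_E_def fp_p_fp_cls)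
next
  case False
  have "list_all2 (\<lambda>l A. l \<in> I \<and> boolean_product Xo I l A) (map k [0..<m]) (map A [0..<m])"
    using assms(3,5) by (simp add: list_all2_conv_all_nth)
  moreover have "successively (\<noteq>) (map k [0..<m])"
    using assms(4) by (simp add: successively_map successively_upt_0_iff)
  moreover have "map k [0..<m] \<noteq> []" using False by simp
  ultimately obtain \<xi> where "foldr (\<circ>) (map A [0..<m]) id (fp_cls Xo I (1, 0))
      = fp_cls Xo I (summand_rep (hd (map k [0..<m])) (prod_list (map (fp_E Xo I) (map A [0..<m])), \<xi>))"
    using alternating_boolean_products_on_unit[OF assms(2)] by blast
  then show ?thesis by (simp add: fp_E_def fp_p_fp_cls summand_rep_def comp_def)
qed

end
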